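(* Let $X$ be an $N$-dimensional $C^1$-manifold with corners and $\sigma:\Delta_d\to X$ continuous and of class $C^1$ on all open faces. Suppose there exist a subdivision of $\Delta_d$ into subsimplices and, for each subsimplex, a chart $(U,\phi)$ of $X$ with the subsimplex mapped into $U$, such that each composite $\phi\circ\sigma|_{\text{subsimplex}}$ has finite volume. Then for every subdivision of $\Delta_d$ into subsimplices each mapped by $\sigma$ into the domain of some chart, and every such choice of charts, the corresponding composites have finite volume. (That is, the property of having finite volume is independent of the choice of subdivision and charts.)
   Context: For $V\subset\mathbb{R}^N_{\ge0}$ open, a function $V\to\mathbb{R}$ is $C^p$ if it extends to a $C^p$ function on an open neighbourhood of $V$ in $\mathbb{R}^N$. A $C^p$-manifold with corners is a second countable Hausdorff space $X$ with an atlas of charts $\phi:U\to V$ (homeomorphisms from open $U\subset X$ onto open $V\subset\mathbb{R}^N_{\ge0}$) whose transition maps are $C^p$ in this sense. $\Delta_d=\{(a_1,\dots,a_d)\mid a_i\ge0,\sum a_i\le1\}$; open faces are interiors of faces of any dimension. A map $\tau$ from a (sub)simplex of dimension $d$ to $\mathbb{R}^N$, continuous and $C^1$ on open faces, has finite volume if $\int\tau^*(\omega)$ converges absolutely for every continuous $d$-form $\omega$ on its image. *)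

theory Defs
  imports "HOL-Analysis.Analysis"
begin

definition C1_on_open :: "('m::euclidean_space) set \<Rightarrow> ('m \<Rightarrow> 'k::euclidean_space) \<Rightarrow> bool" where
  "C1_on_open W g \<longleftrightarrow> open W \<and>
     (\<exists>g'. (\<forall>y\<in>W. (g has_derivative blinfun_apply (g' y)) (at y)) \<and> continuous_on W g')"

definition C1_ext :: "('m::euclidean_space) set \<Rightarrow> ('m \<Rightarrow> 'k::euclidean_space) \<Rightarrow> bool" where
  "C1_ext V f \<longleftrightarrow> (\<exists>W g. V \<subseteq> W \<and> C1_on_open W g \<and> (\<forall>y\<in>V. g y = f y))"

text \<open>f is C^1 near the point x of S (locally extends to a C^1 function); used for
  C^1-ness on open faces (relatively open subsets of affine subspaces).\<close>
definition C1_near :: "('m::euclidean_space) set \<Rightarrow> ('m \<Rightarrow> 'k::euclidean_space) \<Rightarrow> 'm \<Rightarrow> bool" where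
  "C1_near S f x \<longleftrightarrow> (\<exists>W g. x \<in> W \<and> C1_on_open W g \<and> (\<forall>y\<in>W \<inter> S. g y = f y))"

definition orthant :: "(real^'n) set" where
  "orthant = {x. \<forall>i. 0 \<le> x $ i}"

definition C1_manifold_with_corners ::
  "'a topology \<Rightarrow> ('a set \<times> ('a \<Rightarrow> real^'n::finite)) set \<Rightarrow> bool" where
  "C1_manifold_with_corners X A \<longleftrightarrow>
     Hausdorff_space X \<and> second_countable X \<and>
     (\<forall>(U, \<phi>)\<in>A. openin X U \<and> openin (top_of_set orthant) (\<phi> ` U) \<and>
        homeomorphic_map (subtopology X U) (top_of_set (\<phi> ` U)) \<phi>) \<and>
     (\<Union>(fst ` A) = topspace X) \<and>
     (\<forall>(U, \<phi>)\<in>A. \<forall>(U', \<psi>)\<in>A. C1_ext (\<phi> ` (U \<inter> U')) (\<psi> \<circ> inv_into U \<phi>))"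

definition std_simplex :: "(real^'d::finite) set" where
  "std_simplex = {a. (\<forall>i. 0 \<le> a $ i) \<and> (\<Sum>i\<in>UNIV. a $ i) \<le> 1}"

definition open_faces :: "('m::euclidean_space) set \<Rightarrow> 'm set set" where
  "open_faces S = {rel_interior F | F. F face_of S}"

definition subdivision :: "(real^'d::finite) set set \<Rightarrow> bool" where
  "subdivision \<T> \<longleftrightarrow> finite \<T> \<and> \<T> \<noteq> {} \<and>
     (\<forall>T\<in>\<T>. int CARD('d) simplex T) \<and>
     \<Union>\<T> = std_simplex \<and>
     (\<forall>T\<in>\<T>. \<forall>T'\<in>\<T>. (T \<inter> T') face_of T \<and> (T \<inter> T') face_of T')"

definition C1_on_open_faces ::
  "'a topology \<Rightarrow> ('a set \<times> ('a \<Rightarrow> real^'n::finite)) set \<Rightarrow> (real^'d::finite \<Rightarrow> 'a) \<Rightarrow> bool" where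
  "C1_on_open_faces X A \<sigma> \<longleftrightarrow>
     continuous_map (top_of_set std_simplex) X \<sigma> \<and>
     (\<forall>F\<in>open_faces std_simplex. \<forall>x\<in>F. \<forall>(U, \<phi>)\<in>A. \<sigma> x \<in> U \<longrightarrow>
        C1_near {y\<in>F. \<sigma> y \<in> U} (\<phi> \<circ> \<sigma>) x)"

definition continuous_form_on :: "(real^'n::finite) set \<Rightarrow> (real^'n \<Rightarrow> ('d \<Rightarrow> real^'n) \<Rightarrow> real) \<Rightarrow> bool" where
  "continuous_form_on S \<omega> \<longleftrightarrow>
     (\<forall>x\<in>S. (\<forall>v j. linear (\<lambda>w. \<omega> x (v(j := w)))) \<and>
             (\<forall>v i j. i \<noteq> j \<and> v i = v j \<longrightarrow> \<omega> x v = 0)) \<and>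
     (\<forall>v. continuous_on S (\<lambda>x. \<omega> x v))"

text \<open>The pullback tau^*(omega), as a density w.r.t. da_1 ... da_d.\<close>
definition pullback_density ::
  "(real^'d::finite \<Rightarrow> real^'n::finite) \<Rightarrow> (real^'n \<Rightarrow> ('d \<Rightarrow> real^'n) \<Rightarrow> real) \<Rightarrow> real^'d \<Rightarrow> real" where
  "pullback_density \<tau> \<omega> a = \<omega> (\<tau> a) (\<lambda>j. frechet_derivative \<tau> (at a) (axis j 1))"

definition finite_volume :: "(real^'d::finite) set \<Rightarrow> (real^'d \<Rightarrow> real^'n::finite) \<Rightarrow> bool" where
  "finite_volume T \<tau> \<longleftrightarrow>
     (\<forall>\<omega>. continuous_form_on (\<tau> ` T) \<omega> \<longrightarrow>
        pullback_density \<tau> \<omega> absolutely_integrable_on interior T)"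

end

theory Submission
  imports Defs
begin

text \<open>Fix a piece \<open>T\<close> of the new subdivision and a chart \<open>\<psi>\<close> around \<open>\<sigma> ` T\<close>. It suffices to
  integrate the pullback densities of \<open>\<psi> \<circ> \<sigma>\<close> over \<open>interior T \<inter> interior T'\<close> for the pieces \<open>T'\<close>
  of the given subdivision: what is left of \<open>interior T\<close> lies in the boundaries of the convex
  pieces \<open>T'\<close>, which are negligible. On \<open>T \<inter> T'\<close> we have \<open>\<psi> \<circ> \<sigma> = h \<circ> \<tau>\<close>, where \<open>\<tau> = \<phi> \<circ> \<sigma>\<close>
  is the given composite of finite volume and \<open>h\<close> is a \<open>C\<^sup>1\<close> chart transition. By the chain
  rule the pullback density of a form along \<open>h \<circ> \<tau>\<close> is alternating multilinear in the columns
  of \<open>D\<tau>\<close>, hence a linear combination of the \<open>d \<times> d\<close> minors of \<open>D\<tau>\<close>. The coefficients are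
  continuous on the compact set \<open>T \<inter> T'\<close>, hence bounded, and each minor is the pullback density
  along \<open>\<tau>\<close> of a constant coordinate form, which is integrable because \<open>\<tau>\<close> has finite volume.\<close>

section \<open>Alternating multilinear forms\<close>

definition multilinear :: "(('d::finite \<Rightarrow> real^'n::finite) \<Rightarrow> real) \<Rightarrow> bool" where
  "multilinear \<Phi> \<longleftrightarrow> (\<forall>v j. linear (\<lambda>w. \<Phi> (v(j := w))))"

definition alternating_multilinear :: "(('d::finite \<Rightarrow> real^'n::finite) \<Rightarrow> real) \<Rightarrow> bool" where
  "alternating_multilinear \<Phi> \<longleftrightarrow>
     multilinear \<Phi> \<and> (\<forall>v i j. i \<noteq> j \<and> v i = v j \<longrightarrow> \<Phi> v = 0)"

lemma continuous_form_on_iff: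
  "continuous_form_on S \<omega> \<longleftrightarrow>
     (\<forall>x\<in>S. alternating_multilinear (\<omega> x)) \<and> (\<forall>v. continuous_on S (\<lambda>x. \<omega> x v))"
  unfolding continuous_form_on_def alternating_multilinear_def multilinear_def by blast

lemma continuous_form_on_subset:
  "continuous_form_on S \<omega> \<Longrightarrow> T \<subseteq> S \<Longrightarrow> continuous_form_on T \<omega>"
  unfolding continuous_form_on_def by (meson continuous_on_subset subsetD)

lemma multilinear_expansion_partial:
  assumes "multilinear \<Phi>" "finite J"
  shows "\<Phi> v = (\<Sum>f\<in>PiE J (\<lambda>_. UNIV).
      (\<Prod>j\<in>J. v j $ f j) * \<Phi> (\<lambda>j. if j \<in> J then axis (f j) 1 else v j))"
  using assms(2)
proof (induction J arbitrary: v rule: finite_induct)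
  case empty
  then show ?case by simp
next
  case (insert z J)
  let ?u = "\<lambda>f j. if j \<in> J then axis (f j) 1 else v j"
  let ?w = "\<lambda>f j. if j \<in> insert z J then axis (f j) 1 else v j"
  have column: "\<Phi> (?u f) = (\<Sum>k\<in>UNIV. v z $ k * \<Phi> (?w (f(z := k))))" for f
  proof -
    have lin: "linear (\<lambda>w. \<Phi> ((?u f)(z := w)))"
      using assms(1) unfolding multilinear_def by blast
    have upd: "(?u f)(z := axis k 1) = ?w (f(z := k))" for k
      using insert.hyps(2) by (auto simp: fun_eq_iff)
    have "?u f = (?u f)(z := (\<Sum>k\<in>UNIV. v z $ k *\<^sub>R axis k 1))"
      using insert.hyps(2) basis_expansion[of "v z"]
      by (auto simp: fun_eq_iff scalar_mult_eq_scaleR)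
    then have "\<Phi> (?u f) = \<Phi> ((?u f)(z := (\<Sum>k\<in>UNIV. v z $ k *\<^sub>R axis k 1)))"
      by (rule arg_cong)
    also have "\<dots> = (\<Sum>k\<in>UNIV. v z $ k * \<Phi> ((?u f)(z := axis k 1)))"
      by (simp only: linear_sum[OF lin] linear_cmul[OF lin] real_scaleR_def)
    finally show ?thesis
      by (simp only: upd)
  qed
  have "\<Phi> v = (\<Sum>f\<in>PiE J (\<lambda>_. UNIV). \<Sum>k\<in>UNIV.
      (\<Prod>j\<in>insert z J. v j $ (f(z := k)) j) * \<Phi> (?w (f(z := k))))"
  proof -
    have "(\<Prod>j\<in>J. v j $ (f(z := k)) j) = (\<Prod>j\<in>J. v j $ f j)" for f k
      using insert.hyps(2) by (intro prod.cong) auto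
    then have "(\<Prod>j\<in>insert z J. v j $ (f(z := k)) j) = v z $ k * (\<Prod>j\<in>J. v j $ f j)" for f k
      using insert.hyps by simp
    then show ?thesis
      unfolding insert.IH[of v] column
      by (simp add: sum_distrib_left mult.assoc mult.left_commute)
  qed
  also have "\<dots> = (\<Sum>(k, f)\<in>UNIV \<times> PiE J (\<lambda>_. UNIV).
      (\<Prod>j\<in>insert z J. v j $ (f(z := k)) j) * \<Phi> (?w (f(z := k))))"
    by (subst sum.swap) (simp add: sum.cartesian_product)
  also have "\<dots> = (\<Sum>g\<in>PiE (insert z J) (\<lambda>_. UNIV). (\<Prod>j\<in>insert z J. v j $ g j) * \<Phi> (?w g))"
    unfolding PiE_insert_eq
    by (subst sum.reindex[OF inj_combinator[OF insert.hyps(2)]]) (simp add: case_prod_unfold)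
  finally show ?case .
qed

lemma multilinear_expansion:
  assumes "multilinear \<Phi>"
  shows "\<Phi> v = (\<Sum>f\<in>UNIV. (\<Prod>j\<in>UNIV. v j $ f j) * \<Phi> (\<lambda>j. axis (f j) 1))"
  using multilinear_expansion_partial[OF assms finite_class.finite_UNIV, of v] by simp

lemma continuous_on_multilinear_apply:
  assumes "\<And>x. x \<in> S \<Longrightarrow> multilinear (\<Phi> x)"
    and "\<And>v. continuous_on S (\<lambda>x. \<Phi> x v)"
    and "\<And>j. continuous_on S (\<lambda>x. w x j)"
  shows "continuous_on S (\<lambda>x. \<Phi> x (w x))"
proof -
  have "continuous_on S (\<lambda>x. \<Sum>f\<in>UNIV. (\<Prod>j\<in>UNIV. w x j $ f j) * \<Phi> x (\<lambda>j. axis (f j) 1))"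
    by (intro continuous_intros assms)
  then show ?thesis
    by (rule continuous_on_cong[THEN iffD1, rotated 2]) (simp_all add: multilinear_expansion assms(1))
qed

lemma alternating_multilinear_swap:
  assumes "alternating_multilinear \<Phi>" "a \<noteq> b"
  shows "\<Phi> (v \<circ> Transposition.transpose a b) = - \<Phi> v"
proof -
  define F where "F p q = \<Phi> (v(a := p, b := q))" for p q
  have lin: "linear (\<lambda>w. \<Phi> (u(j := w)))" for u j
    using assms(1) unfolding alternating_multilinear_def multilinear_def by blast
  have diag: "F p p = 0" for p
    using assms unfolding F_def alternating_multilinear_def by (metis fun_upd_same fun_upd_other)
  have add_left: "F (p + p') q = F p q + F p' q" for p p' q
    using linear_add[OF lin[of "v(b := q)" a]] assms(2) by (simp add: F_def fun_upd_twist)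
  have add_right: "F p (q + q') = F p q + F p q'" for p q q'
    using linear_add[OF lin[of "v(a := p)" b]] by (simp add: F_def)
  have "0 = F (v a + v b) (v a + v b)"
    by (simp only: diag)
  also have "\<dots> = F (v a) (v a) + F (v b) (v a) + (F (v a) (v b) + F (v b) (v b))"
    by (simp only: add_left add_right)
  finally have "0 = F (v a) (v b) + F (v b) (v a)"
    by (simp add: diag)
  moreover have "F (v a) (v b) = \<Phi> v" by (simp add: F_def)
  moreover have "F (v b) (v a) = \<Phi> (v \<circ> Transposition.transpose a b)"
    using assms(2) by (auto simp: F_def Transposition.transpose_def intro!: arg_cong[where f = \<Phi>])
  ultimately show ?thesis by linarith
qed

lemma alternating_multilinear_permute:
  assumes "alternating_multilinear \<Phi>" "p permutes (UNIV :: 'd::finite set)"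
  shows "\<Phi> ((v :: 'd \<Rightarrow> real^'n::finite) \<circ> p) = of_int (sign p) * \<Phi> v"
  using assms(2) finite_class.finite_UNIV
proof (induction p arbitrary: v rule: permutes_induct)
  case id
  then show ?case by simp
next
  case (swap a b p)
  have "permutation p"
    using swap.hyps(4) by (rule permutes_imp_permutation[OF finite_class.finite_UNIV])
  then have sign_tp: "sign (Transposition.transpose a b \<circ> p) = - sign p"
    using swap.hyps(3) by (simp add: sign_compose permutation_swap_id sign_swap_id)
  have "\<Phi> (v \<circ> (Transposition.transpose a b \<circ> p))
      = of_int (sign p) * \<Phi> (v \<circ> Transposition.transpose a b)"
    using swap.IH[of "v \<circ> Transposition.transpose a b"] by (simp only: o_assoc)
  also have "\<dots> = of_int (sign (Transposition.transpose a b \<circ> p)) * \<Phi> v"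
    using alternating_multilinear_swap[OF assms(1) swap.hyps(3), of v] by (simp add: sign_tp)
  finally show ?case .
qed

text \<open>The sum runs over all \<open>q\<close>, not only the increasing ones: non-injective \<open>q\<close> contribute
  nothing, and every set of \<open>d\<close> coordinates is counted \<open>d!\<close> times.\<close>

lemma alternating_multilinear_det_expansion:
  assumes "alternating_multilinear \<Phi>"
  shows "fact CARD('d) * \<Phi> (v :: 'd::finite \<Rightarrow> real^'n::finite)
    = (\<Sum>q\<in>UNIV. \<Phi> (\<lambda>j. axis (q j) 1) * det (\<chi> j k. v j $ q k :: real^'d^'d))"
proof -
  let ?E = "\<lambda>q::'d \<Rightarrow> 'n. (\<lambda>j. axis (q j) 1 :: real^'n)"
  have summand: "(\<Sum>q\<in>UNIV. \<Phi> (?E q) * (of_int (sign p) * (\<Prod>j\<in>UNIV. v j $ q (p j)))) = \<Phi> v"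
    if p: "p permutes (UNIV :: 'd set)" for p
  proof -
    have "(\<Sum>q\<in>UNIV. \<Phi> (?E q) * (of_int (sign p) * (\<Prod>j\<in>UNIV. v j $ q (p j))))
        = (\<Sum>f\<in>UNIV. \<Phi> (?E f \<circ> inv p) * (of_int (sign p) * (\<Prod>j\<in>UNIV. v j $ f j)))"
      using permutes_inverses[OF p]
      by (intro sum.reindex_bij_witness[where i = "\<lambda>f. f \<circ> inv p" and j = "\<lambda>q. q \<circ> p"])
         (auto simp: fun_eq_iff o_def)
    also have "\<dots> = (\<Sum>f\<in>UNIV. (\<Prod>j\<in>UNIV. v j $ f j) * \<Phi> (?E f))"
    proof (intro sum.cong refl)
      fix f :: "'d \<Rightarrow> 'n"
      have "sign (inv p) = sign p"
        using sign_inverse permutes_imp_permutation[OF finite_class.finite_UNIV p] by blast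
      moreover have "of_int (sign p) * of_int (sign p) = (1::real)"
        by (metis of_int_1 of_int_mult sign_idempotent)
      ultimately show "\<Phi> (?E f \<circ> inv p) * (of_int (sign p) * (\<Prod>j\<in>UNIV. v j $ f j))
          = (\<Prod>j\<in>UNIV. v j $ f j) * \<Phi> (?E f)"
        using alternating_multilinear_permute[OF assms permutes_inv[OF p]] by simp
    qed
    also have "\<dots> = \<Phi> v"
      using assms by (simp add: multilinear_expansion alternating_multilinear_def)
    finally show ?thesis .
  qed
  have "(\<Sum>q\<in>UNIV. \<Phi> (?E q) * det (\<chi> j k. v j $ q k :: real^'d^'d))
      = (\<Sum>p | p permutes (UNIV :: 'd set).
           \<Sum>q\<in>UNIV. \<Phi> (?E q) * (of_int (sign p) * (\<Prod>j\<in>UNIV. v j $ q (p j))))"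
    by (simp add: det_def sum_distrib_left sum.swap[of _ UNIV])
  also have "\<dots> = fact CARD('d) * \<Phi> v"
    by (simp add: summand card_permutations[OF refl finite_class.finite_UNIV])
  finally show ?thesis by simp
qed

lemma alternating_multilinear_comp_linear:
  fixes \<Phi> :: "('d::finite \<Rightarrow> real^'n::finite) \<Rightarrow> real" and L :: "real^'n \<Rightarrow> real^'n"
  assumes "alternating_multilinear \<Phi>" "linear L"
  shows "alternating_multilinear (\<lambda>v. \<Phi> (L \<circ> v))"
  unfolding alternating_multilinear_def multilinear_def
proof safe
  fix v :: "'d \<Rightarrow> real^'n" and j
  have "(\<lambda>w. \<Phi> (L \<circ> v(j := w))) = (\<lambda>w. \<Phi> ((L \<circ> v)(j := w))) \<circ> L"
    by (auto simp: fun_eq_iff intro!: arg_cong[where f = \<Phi>])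
  moreover have "linear (\<lambda>w. \<Phi> ((L \<circ> v)(j := w)))"
    using assms(1) unfolding alternating_multilinear_def multilinear_def by blast
  ultimately show "linear (\<lambda>w. \<Phi> (L \<circ> v(j := w)))"
    using assms(2) linear_compose by metis
next
  fix v :: "'d \<Rightarrow> real^'n" and i j
  assume "i \<noteq> j" "v i = v j"
  then show "\<Phi> (L \<circ> v) = 0"
    using assms(1) unfolding alternating_multilinear_def by (metis comp_apply)
qed

text \<open>The constant form \<open>dx\<^bsub>q 1\<^esub> \<and> \<dots> \<and> dx\<^bsub>q d\<^esub>\<close>; the point argument is ignored.\<close>

definition coordinate_form :: "('d::finite \<Rightarrow> 'n::finite) \<Rightarrow> real^'n \<Rightarrow> ('d \<Rightarrow> real^'n) \<Rightarrow> real" where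
  "coordinate_form q x v = det (\<chi> j k. v j $ q k :: real^'d^'d)"

lemma continuous_form_on_coordinate_form:
  fixes q :: "'d::finite \<Rightarrow> 'n::finite"
  shows "continuous_form_on S (coordinate_form q)"
proof -
  let ?row = "\<lambda>w::real^'n. (\<chi> k. w $ q k) :: real^'d"
  have rows: "(\<chi> j k. (v(i := w)) j $ q k :: real^'d^'d) = (\<chi> j. if j = i then ?row w else ?row (v j))"
    for v :: "'d \<Rightarrow> real^'n" and i w
    by (simp add: vec_eq_iff)
  have "linear (\<lambda>w. coordinate_form q x (v(i := w)))" for x v i
  proof -
    have "?row (w + w') = ?row w + ?row w'" "?row (c *\<^sub>R w) = c *s ?row w" for w w' c
      by (simp_all add: vec_eq_iff)
    then show ?thesis
      unfolding coordinate_form_def rows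
      by (intro linearI) (simp_all only: det_row_add det_row_mul real_scaleR_def)
  qed
  moreover have "coordinate_form q x v = 0" if "i \<noteq> j" "v i = v j" for x v i j
    unfolding coordinate_form_def by (rule det_identical_rows[OF that(1)]) (simp add: row_def that(2))
  ultimately show ?thesis
    unfolding continuous_form_on_def coordinate_form_def by auto
qed

lemma pullback_density_comp_linear:
  fixes \<rho> \<tau> :: "real^'d::finite \<Rightarrow> real^'n::finite"
  assumes "alternating_multilinear (\<omega> (\<rho> a))" "linear L"
    and "frechet_derivative \<rho> (at a) = L \<circ> frechet_derivative \<tau> (at a)"
  shows "pullback_density \<rho> \<omega> a = (\<Sum>q\<in>UNIV.
      \<omega> (\<rho> a) (\<lambda>j. L (axis (q j) 1)) / fact CARD('d) * pullback_density \<tau> (coordinate_form q) a)"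
proof -
  let ?\<Phi> = "\<lambda>v. \<omega> (\<rho> a) (L \<circ> v)"
  let ?v = "\<lambda>j. frechet_derivative \<tau> (at a) (axis j 1)"
  have "fact CARD('d) * pullback_density \<rho> \<omega> a = fact CARD('d) * ?\<Phi> ?v"
    by (simp add: pullback_density_def assms(3) o_def)
  also have "\<dots> = (\<Sum>q\<in>UNIV. ?\<Phi> (\<lambda>j. axis (q j) 1) * det (\<chi> j k. ?v j $ q k :: real^'d^'d))"
    by (rule alternating_multilinear_det_expansion[OF alternating_multilinear_comp_linear[OF assms(1,2)]])
  also have "\<dots> = (\<Sum>q\<in>UNIV. \<omega> (\<rho> a) (\<lambda>j. L (axis (q j) 1)) * pullback_density \<tau> (coordinate_form q) a)"
    by (simp add: pullback_density_def coordinate_form_def o_def)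
  finally show ?thesis
    by (simp add: sum_divide_distrib[symmetric] eq_divide_eq mult.commute)
qed

section \<open>Integrability of pullback densities\<close>

lemma C1_on_open_differentiable:
  assumes "C1_on_open W g" "x \<in> W"
  shows "g differentiable (at x)"
proof -
  from assms(1) obtain g' where "\<forall>y\<in>W. (g has_derivative blinfun_apply (g' y)) (at y)"
    unfolding C1_on_open_def by (elim conjE exE)
  then show ?thesis
    using assms(2) unfolding differentiable_def by blast
qed

lemma C1_near_imp_differentiable:
  assumes "C1_near S f x" "x \<in> interior S"
  shows "f differentiable (at x)"
proof -
  obtain W g where W: "x \<in> W" "C1_on_open W g" and agree: "\<forall>y\<in>W \<inter> S. g y = f y"
    using assms(1) unfolding C1_near_def by blast
  obtain D where "(g has_derivative D) (at x)"
    using C1_on_open_differentiable[OF W(2,1)] unfolding differentiable_def by (elim exE)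
  then have "(f has_derivative D) (at x)"
  proof (rule has_derivative_transform_within_open)
    show "open (W \<inter> interior S)"
      using W(2) unfolding C1_on_open_def by blast
    show "x \<in> W \<inter> interior S"
      using W(1) assms(2) by blast
    show "g y = f y" if "y \<in> W \<inter> interior S" for y
      using agree that interior_subset by blast
  qed
  then show ?thesis
    unfolding differentiable_def by blast
qed

lemma absolutely_integrable_continuous_mult:
  fixes c g :: "'a::euclidean_space \<Rightarrow> real"
  assumes "S \<in> sets lebesgue" "S \<subseteq> K" "compact K" "continuous_on K c"
    and "g absolutely_integrable_on S"
  shows "(\<lambda>x. c x * g x) absolutely_integrable_on S"
proof (rule absolutely_integrable_bounded_measurable_product[OF bilinear_times])
  show "c \<in> borel_measurable (lebesgue_on S)"
    using assms(1,2,4) continuous_on_subset continuous_imp_measurable_on_sets_lebesgue by blast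
  show "bounded (c ` S)"
    using assms(2-4) compact_continuous_image compact_imp_bounded bounded_subset image_mono by metis
qed (use assms(1,5) in auto)

lemma absolutely_integrable_on_convex_cover:
  fixes f :: "'a::euclidean_space \<Rightarrow> real"
  assumes "finite \<K>" "\<And>K. K \<in> \<K> \<Longrightarrow> convex K \<and> closed K" "S \<subseteq> \<Union>\<K>"
    and "\<And>K. K \<in> \<K> \<Longrightarrow> f absolutely_integrable_on (S \<inter> interior K)"
  shows "f absolutely_integrable_on S"
proof -
  let ?V = "\<Union>K\<in>\<K>. S \<inter> interior K"
  have integrable: "f absolutely_integrable_on ?V"
    using assms(1,4) by (induction \<K> rule: finite_induct) (auto simp: absolutely_integrable_Un)
  moreover have "negligible (\<Union>(frontier ` \<K>))"
    using assms(1,2) negligible_convex_frontier by (auto intro: negligible_Union)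
  moreover have "S - ?V \<subseteq> \<Union>(frontier ` \<K>)"
    using assms(2,3) by (fastforce simp: frontier_def)
  ultimately have "negligible {x \<in> S - ?V. f x \<noteq> 0}"
    by (blast intro: negligible_subset)
  moreover have "{x \<in> ?V - S. f x \<noteq> 0} = {}"
    by blast
  ultimately show ?thesis
    using absolutely_integrable_spike_set_eq[of ?V S f] integrable negligible_empty by metis
qed

lemma absolutely_integrable_pullback_density_comp:
  fixes \<rho> \<tau> :: "real^'d::finite \<Rightarrow> real^'n::finite"
  assumes "open S" "S \<subseteq> K" "compact K"
    and "continuous_on K \<rho>" "continuous_on K \<tau>"
    and "C1_on_open W h" "\<tau> ` K \<subseteq> W" "\<And>a. a \<in> K \<Longrightarrow> \<rho> a = h (\<tau> a)"
    and "\<And>a. a \<in> S \<Longrightarrow> \<tau> differentiable (at a)"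
    and "\<And>q. pullback_density \<tau> (coordinate_form q) absolutely_integrable_on S"
    and "continuous_form_on (\<rho> ` K) \<omega>"
  shows "pullback_density \<rho> \<omega> absolutely_integrable_on S"
proof -
  from assms(6) obtain h'
    where h': "\<forall>y\<in>W. (h has_derivative blinfun_apply (h' y)) (at y)" and "continuous_on W h'"
    unfolding C1_on_open_def by (elim conjE exE) blast
  have chain: "frechet_derivative \<rho> (at a) = h' (\<tau> a) \<circ> frechet_derivative \<tau> (at a)"
    if "a \<in> S" for a
  proof -
    have "((h \<circ> \<tau>) has_derivative h' (\<tau> a) \<circ> frechet_derivative \<tau> (at a)) (at a)"
      using that assms(2,7,9) h' frechet_derivative_works
      by (intro diff_chain_at) blast+
    then have "(\<rho> has_derivative h' (\<tau> a) \<circ> frechet_derivative \<tau> (at a)) (at a)"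
      using that assms(1,2,8)
      by (intro has_derivative_transform_within_open[of "h \<circ> \<tau>" _ a UNIV S \<rho>]) auto
    then show ?thesis
      by (rule frechet_derivative_at[symmetric])
  qed
  define coeff where
    "coeff q a = \<omega> (\<rho> a) (\<lambda>j. h' (\<tau> a) (axis (q j) 1)) / fact CARD('d)" for q :: "'d \<Rightarrow> 'n" and a
  have coeff_continuous: "continuous_on K (coeff q)" for q
  proof -
    have "continuous_on K (\<lambda>a. \<omega> (\<rho> a) (\<lambda>j. h' (\<tau> a) (axis (q j) 1)))"
    proof (rule continuous_on_multilinear_apply[where \<Phi> = "\<lambda>a. \<omega> (\<rho> a)"])
      show "multilinear (\<omega> (\<rho> a))" if "a \<in> K" for a
        using assms(11) that unfolding continuous_form_on_iff alternating_multilinear_def by blast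
      have "continuous_on (\<rho> ` K) (\<lambda>x. \<omega> x v)" for v
        using assms(11) by (simp add: continuous_form_on_iff)
      then show "continuous_on K (\<lambda>a. \<omega> (\<rho> a) v)" for v
        by (rule continuous_on_compose2[of "\<rho> ` K" "\<lambda>x. \<omega> x v" K \<rho>, OF _ assms(4) subset_refl])
      have "continuous_on K (\<lambda>a. h' (\<tau> a))"
        by (rule continuous_on_compose2[OF \<open>continuous_on W h'\<close> assms(5,7)])
      then show "continuous_on K (\<lambda>a. h' (\<tau> a) (axis (q j) 1))" for j
        by (rule blinfun.continuous_on[OF _ continuous_on_const])
    qed
    then show ?thesis
      unfolding coeff_def by (rule continuous_on_divide[OF _ continuous_on_const]) auto
  qed
  have integrable: "(\<lambda>a. \<Sum>q\<in>UNIV. coeff q a * pullback_density \<tau> (coordinate_form q) a)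
      absolutely_integrable_on S"
    using assms(1-3,10) coeff_continuous
    by (intro absolutely_integrable_sum absolutely_integrable_continuous_mult) auto
  have decomposition:
    "pullback_density \<rho> \<omega> a = (\<Sum>q\<in>UNIV. coeff q a * pullback_density \<tau> (coordinate_form q) a)"
    if "a \<in> S" for a
    using that assms(2,11) chain unfolding coeff_def continuous_form_on_iff
    by (intro pullback_density_comp_linear)
       (auto simp: bounded_linear.linear[OF blinfun.bounded_linear_right])
  show ?thesis
    by (rule absolutely_integrable_spike[OF integrable negligible_empty]) (simp add: decomposition)
qed

section \<open>Charts and subdivisions\<close>

lemma convex_std_simplex: "convex std_simplex"
  unfolding convex_def std_simplex_def
  by (auto simp: sum.distrib simp flip: sum_distrib_left intro!: convex_bound_le)

lemma subdivision_memD: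
  fixes T :: "(real^'d::finite) set"
  assumes "subdivision \<T>" "T \<in> \<T>"
  shows "T \<subseteq> std_simplex" "compact T" "convex T"
proof -
  have "int CARD('d) simplex T"
    using assms unfolding subdivision_def by blast
  then show "compact T" "convex T"
    using compact_simplex unfolding simplex by (auto simp: convex_convex_hull)
  show "T \<subseteq> std_simplex"
    using assms unfolding subdivision_def by blast
qed

lemma absolutely_integrable_on_interior_subdivision:
  fixes f :: "real^'d::finite \<Rightarrow> real"
  assumes "subdivision \<T>" "T \<subseteq> std_simplex"
    and "\<And>T'. T' \<in> \<T> \<Longrightarrow> f absolutely_integrable_on (interior T \<inter> interior T')"
  shows "f absolutely_integrable_on interior T"
proof (rule absolutely_integrable_on_convex_cover[OF _ _ _ assms(3)])
  show "finite \<T>"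
    using assms(1) unfolding subdivision_def by blast
  show "convex K \<and> closed K" if "K \<in> \<T>" for K
    using subdivision_memD[OF assms(1) that] compact_imp_closed by blast
  show "interior T \<subseteq> \<Union>\<T>"
    using assms(1,2) interior_subset unfolding subdivision_def by blast
qed

lemma chart_inj_on:
  assumes "C1_manifold_with_corners X A" "(U, \<phi>) \<in> A"
  shows "inj_on \<phi> U"
proof -
  have "openin X U" "homeomorphic_map (subtopology X U) (top_of_set (\<phi> ` U)) \<phi>"
    using assms unfolding C1_manifold_with_corners_def by fastforce+
  then show ?thesis
    using homeomorphic_imp_injective_map openin_subset by (metis topspace_subtopology_subset)
qed

lemma chart_transition:
  assumes "C1_manifold_with_corners X A" "(U, \<phi>) \<in> A" "(U', \<psi>) \<in> A"
  obtains W h where "C1_on_open W h" "\<phi> ` (U \<inter> U') \<subseteq> W" "\<And>x. x \<in> U \<inter> U' \<Longrightarrow> \<psi> x = h (\<phi> x)"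
proof -
  have "C1_ext (\<phi> ` (U \<inter> U')) (\<psi> \<circ> inv_into U \<phi>)"
    using assms unfolding C1_manifold_with_corners_def by fastforce
  then obtain W h where "\<phi> ` (U \<inter> U') \<subseteq> W" "C1_on_open W h"
      and "\<forall>y\<in>\<phi> ` (U \<inter> U'). h y = \<psi> (inv_into U \<phi> y)"
    unfolding C1_ext_def by auto
  moreover have "inv_into U \<phi> (\<phi> x) = x" if "x \<in> U" for x
    using chart_inj_on[OF assms(1,2)] that by simp
  ultimately show ?thesis
    using that by auto
qed

lemma continuous_on_chart_comp:
  assumes "C1_manifold_with_corners X A" "(U, \<phi>) \<in> A"
    and "continuous_map (top_of_set S) X \<sigma>" "\<sigma> ` T \<subseteq> U" "T \<subseteq> S"
  shows "continuous_on T (\<phi> \<circ> \<sigma>)"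
proof -
  have "continuous_map (subtopology X U) (top_of_set (\<phi> ` U)) \<phi>"
    using assms(1,2) homeomorphic_imp_continuous_map
    unfolding C1_manifold_with_corners_def by fastforce
  moreover have "continuous_map (top_of_set T) (subtopology X U) \<sigma>"
  proof (rule continuous_map_into_subtopology)
    show "continuous_map (top_of_set T) X \<sigma>"
      using continuous_map_from_subtopology[OF assms(3), of T] assms(5)
      by (simp add: subtopology_subtopology Int_absorb1)
    show "\<sigma> \<in> topspace (top_of_set T) \<rightarrow> U"
      using assms(4) by auto
  qed
  ultimately have "continuous_map (top_of_set T) (top_of_set (\<phi> ` U)) (\<phi> \<circ> \<sigma>)"
    using continuous_map_compose by blast
  then show ?thesis
    using continuous_map_into_fulltopology by auto
qed

lemma differentiable_chart_comp:
  assumes "C1_on_open_faces X A \<sigma>" "(U, \<phi>) \<in> A"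
    and "\<sigma> ` S \<subseteq> U" "S \<subseteq> std_simplex" "a \<in> interior S"
  shows "(\<phi> \<circ> \<sigma>) differentiable (at a)"
proof (rule C1_near_imp_differentiable)
  let ?F = "rel_interior std_simplex :: (real^'d) set"
  have "?F \<in> open_faces std_simplex"
    unfolding open_faces_def using face_of_refl[OF convex_std_simplex] by blast
  moreover have "interior S \<subseteq> ?F"
    using assms(4) interior_mono interior_subset_rel_interior by blast
  ultimately show "C1_near {y \<in> ?F. \<sigma> y \<in> U} (\<phi> \<circ> \<sigma>) a"
    using assms interior_subset unfolding C1_on_open_faces_def by fastforce
  have "interior S \<subseteq> {y \<in> ?F. \<sigma> y \<in> U}"
    using \<open>interior S \<subseteq> ?F\<close> assms(3) interior_subset by blast
  then show "a \<in> interior {y \<in> ?F. \<sigma> y \<in> U}"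
    using assms(5) interior_maximal by blast
qed

lemma absolutely_integrable_pullback_density_change_of_chart:
  fixes \<sigma> :: "real^'d::finite \<Rightarrow> 'a" and \<psi> \<phi> :: "'a \<Rightarrow> real^'n::finite"
  assumes X: "C1_manifold_with_corners X A" and \<sigma>: "C1_on_open_faces X A \<sigma>"
    and \<psi>: "(U, \<psi>) \<in> A" "\<sigma> ` T \<subseteq> U" "T \<subseteq> std_simplex" "compact T"
    and \<phi>: "(U', \<phi>) \<in> A" "\<sigma> ` T' \<subseteq> U'" "T' \<subseteq> std_simplex" "compact T'"
    and "finite_volume T' (\<phi> \<circ> \<sigma>)"
    and "continuous_form_on ((\<psi> \<circ> \<sigma>) ` T) \<omega>"
  shows "pullback_density (\<psi> \<circ> \<sigma>) \<omega> absolutely_integrable_on (interior T \<inter> interior T')"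
proof -
  obtain W h where "C1_on_open W h" "\<phi> ` (U' \<inter> U) \<subseteq> W" and h: "\<And>x. x \<in> U' \<inter> U \<Longrightarrow> \<psi> x = h (\<phi> x)"
    using chart_transition[OF X \<phi>(1) \<psi>(1)] by blast
  have "continuous_map (top_of_set std_simplex) X \<sigma>"
    using \<sigma> unfolding C1_on_open_faces_def by blast
  then have "continuous_on (T \<inter> T') (\<psi> \<circ> \<sigma>)" "continuous_on (T \<inter> T') (\<phi> \<circ> \<sigma>)"
    using continuous_on_chart_comp[OF X] \<psi> \<phi> by (meson image_mono inf_le1 inf_le2 order_trans)+
  show ?thesis
  proof (rule absolutely_integrable_pullback_density_comp[where K = "T \<inter> T'"])
    have "\<sigma> ` (T \<inter> T') \<subseteq> U' \<inter> U"
      using \<psi>(2) \<phi>(2) by blast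
    then show "(\<phi> \<circ> \<sigma>) ` (T \<inter> T') \<subseteq> W" "\<And>a. a \<in> T \<inter> T' \<Longrightarrow> (\<psi> \<circ> \<sigma>) a = h ((\<phi> \<circ> \<sigma>) a)"
      using \<open>\<phi> ` (U' \<inter> U) \<subseteq> W\<close> h by (auto simp: image_subset_iff)
    show "(\<phi> \<circ> \<sigma>) differentiable (at a)" if "a \<in> interior T \<inter> interior T'" for a
      using differentiable_chart_comp[OF \<sigma> \<phi>(1-3)] that by blast
    show "pullback_density (\<phi> \<circ> \<sigma>) (coordinate_form q) absolutely_integrable_on (interior T \<inter> interior T')"
      for q
    proof -
      have "pullback_density (\<phi> \<circ> \<sigma>) (coordinate_form q) absolutely_integrable_on interior T'"
        using \<open>finite_volume T' (\<phi> \<circ> \<sigma>)\<close> continuous_form_on_coordinate_form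
        unfolding finite_volume_def by blast
      then show ?thesis
        by (rule set_integrable_subset) auto
    qed
    show "continuous_form_on ((\<psi> \<circ> \<sigma>) ` (T \<inter> T')) \<omega>"
      using \<open>continuous_form_on ((\<psi> \<circ> \<sigma>) ` T) \<omega>\<close> by (rule continuous_form_on_subset) auto
  qed (use \<open>C1_on_open W h\<close> \<open>continuous_on (T \<inter> T') (\<psi> \<circ> \<sigma>)\<close> \<open>continuous_on (T \<inter> T') (\<phi> \<circ> \<sigma>)\<close>
         \<psi>(4) \<phi>(4) interior_subset in auto)
qed

theorem lemma4p6:
  fixes X :: "'a topology"
    and A :: "('a set \<times> ('a \<Rightarrow> real^'n::finite)) set"
    and \<sigma> :: "real^'d::finite \<Rightarrow> 'a"
  assumes "C1_manifold_with_corners X A"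
    and "C1_on_open_faces X A \<sigma>"
    and "\<exists>\<T> c. subdivision \<T> \<and>
           (\<forall>T\<in>\<T>. c T \<in> A \<and> \<sigma> ` T \<subseteq> fst (c T) \<and> finite_volume T (snd (c T) \<circ> \<sigma>))"
  shows "\<forall>\<T>'. subdivision \<T>' \<longrightarrow>
           (\<forall>T\<in>\<T>'. \<forall>(U, \<phi>)\<in>A. \<sigma> ` T \<subseteq> U \<longrightarrow> finite_volume T (\<phi> \<circ> \<sigma>))"
proof -
  obtain \<T> c where \<T>: "subdivision \<T>"
    and c: "\<forall>T\<in>\<T>. c T \<in> A \<and> \<sigma> ` T \<subseteq> fst (c T) \<and> finite_volume T (snd (c T) \<circ> \<sigma>)"
    using assms(3) by blast
  have "finite_volume T (\<psi> \<circ> \<sigma>)"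
    if "subdivision \<T>'" "T \<in> \<T>'" "(U, \<psi>) \<in> A" "\<sigma> ` T \<subseteq> U" for \<T>' T U \<psi>
    unfolding finite_volume_def
  proof (intro allI impI)
    fix \<omega> :: "real^'n \<Rightarrow> ('d \<Rightarrow> real^'n) \<Rightarrow> real"
    assume \<omega>: "continuous_form_on ((\<psi> \<circ> \<sigma>) ` T) \<omega>"
    show "pullback_density (\<psi> \<circ> \<sigma>) \<omega> absolutely_integrable_on interior T"
    proof (rule absolutely_integrable_on_interior_subdivision[OF \<T>])
      show "T \<subseteq> std_simplex"
        using subdivision_memD[OF that(1,2)] by blast
      fix T' assume "T' \<in> \<T>"
      then obtain U' \<phi> where "(U', \<phi>) \<in> A" "\<sigma> ` T' \<subseteq> U'" "finite_volume T' (\<phi> \<circ> \<sigma>)"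
        using c by (metis prod.collapse)
      then show "pullback_density (\<psi> \<circ> \<sigma>) \<omega> absolutely_integrable_on (interior T \<inter> interior T')"
        using absolutely_integrable_pullback_density_change_of_chart[OF assms(1,2) _ _ _ _ _ _ _ _ _ \<omega>]
          subdivision_memD[OF \<T> \<open>T' \<in> \<T>\<close>] subdivision_memD[OF that(1,2)] that(3,4) by blast
    qed
  qed
  then show ?thesis
    by blast
qed

end
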